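(* Let $N\ge 1$ be the number of users, indexed $1,\dots,N$. For each user $i$ let $\mathbf{x}_i$ be an observed feature vector and let $\phi(\mathbf{x}_i,\ell)\in\mathbb{R}$ be given for $\ell\in\{0,1\}$. For each pair $i<j$ let $\mathbf{z}_{i,j}$ be an observed relationship vector (write $\mathbf{z}_{j,i}=\mathbf{z}_{i,j}$) and let $\psi(\mathbf{z}_{i,j},a,b)\in\mathbb{R}$ be given for $a,b\in\{0,1\}$, where $a$ refers to user $i$ and $b$ to user $j$. Assume: (i) if there is no observed relationship between users $i$ and $j$, then $\psi(\mathbf{z}_{i,j},a,b)=0$ for all $a,b\in\{0,1\}$; (ii) for every pair $i<j$, $\psi(\mathbf{z}_{i,j},1,1)=0\le \psi(\mathbf{z}_{i,j},0,0)\le \psi(\mathbf{z}_{i,j},0,1)$ and $\psi(\mathbf{z}_{i,j},0,0)\le \psi(\mathbf{z}_{i,j},1,0)$. Consider the optimization problem $$\min_{\mathbf{L}\in\{0,1\}^N}\ E(\mathbf{L}),\qquad E(\mathbf{L})=\sum_{i=1}^N\phi(\mathbf{x}_i,\ell_i)+\sum_{i<j}\psi(\mathbf{z}_{i,j},\ell_i,\ell_j).$$ Define the Energy Graph as the directed graph with node set $\{s,t,u_1,\dots,u_N\}$ and edges with capacities: - for each $i$, an edge $(u_i,t)$ with capacity $\phi(\mathbf{x}_i,1)$; - for each $i$, an edge $(s,u_i)$ with capacity $\phi(\mathbf{x}_i,0)+\tfrac12\sum_{j\ne i}\psi(\mathbf{z}_{i,j},0,0)$; - for each pair $i<j$ with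 an observed relationship, edges $(u_i,u_j)$ with capacity $\psi(\mathbf{z}_{i,j},1,0)-\tfrac12\psi(\mathbf{z}_{i,j},0,0)$ and $(u_j,u_i)$ with capacity $\psi(\mathbf{z}_{i,j},0,1)-\tfrac12\psi(\mathbf{z}_{i,j},0,0)$. Then the optimal solutions of the optimization problem correspond exactly to minimum capacity $s$-$t$ cuts of the Energy Graph: if $(S,T)$ is a minimum capacity $s$-$t$ cut and $\mathbf{L}^\star$ is defined by $\ell^\star_i=1$ if $u_i\in S$ and $\ell^\star_i=0$ if $u_i\in T$, then $\mathbf{L}^\star$ minimizes $E$, and the minimum value of $E$ equals the minimum cut capacity.
   Context: This models classification of social media users as in a target location ($\ell_i=1$) or not ($\ell_i=0$); $\phi$ is the "profile energy" and $\psi$ the "link energy". An $s$-$t$ cut is a partition of the node set into $S\ni s$ and $T\ni t$; its capacity is the sum of capacities of all edges directed from a node of $S$ to a node of $T$. *)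

theory Defs
  imports Complex_Main
begin

datatype node = Src | Snk | U nat

text \<open>Symmetric access to relationship vectors: z_{j,i} = z_{i,j}; only z i j with i<j is used.\<close>
definition zsym :: "(nat \<Rightarrow> nat \<Rightarrow> 'z) \<Rightarrow> nat \<Rightarrow> nat \<Rightarrow> 'z" where
  "zsym z i j = (if i < j then z i j else z j i)"

definition pairs :: "nat \<Rightarrow> (nat \<times> nat) set" where
  "pairs N = {(i, j). 1 \<le> i \<and> i < j \<and> j \<le> N}"

definition labelings :: "nat \<Rightarrow> (nat \<Rightarrow> nat) set" where
  "labelings N = {L. \<forall>i\<in>{1..N}. L i \<in> {0, 1}}"

definition energy ::
  "nat \<Rightarrow> (nat \<Rightarrow> 'x) \<Rightarrow> ('x \<Rightarrow> nat \<Rightarrow> real) \<Rightarrow> (nat \<Rightarrow> nat \<Rightarrow> 'z)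
   \<Rightarrow> ('z \<Rightarrow> nat \<Rightarrow> nat \<Rightarrow> real) \<Rightarrow> (nat \<Rightarrow> nat) \<Rightarrow> real" where
  "energy N x \<phi> z \<psi> L =
     (\<Sum>i=1..N. \<phi> (x i) (L i)) + (\<Sum>(i, j)\<in>pairs N. \<psi> (z i j) (L i) (L j))"

definition eg_nodes :: "nat \<Rightarrow> node set" where
  "eg_nodes N = {Src, Snk} \<union> U ` {1..N}"

text \<open>Edge set of the Energy Graph; rel i j (for i<j) means an observed relationship.\<close>
definition eg_edges :: "nat \<Rightarrow> (nat \<Rightarrow> nat \<Rightarrow> bool) \<Rightarrow> (node \<times> node) set" where
  "eg_edges N rel =
     {(U i, Snk) | i. i \<in> {1..N}} \<union> {(Src, U i) | i. i \<in> {1..N}} \<union>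
     {(U i, U j) | i j. (i, j) \<in> pairs N \<and> rel i j} \<union>
     {(U j, U i) | i j. (i, j) \<in> pairs N \<and> rel i j}"

fun eg_cap ::
  "nat \<Rightarrow> (nat \<Rightarrow> 'x) \<Rightarrow> ('x \<Rightarrow> nat \<Rightarrow> real) \<Rightarrow> (nat \<Rightarrow> nat \<Rightarrow> 'z)
   \<Rightarrow> ('z \<Rightarrow> nat \<Rightarrow> nat \<Rightarrow> real) \<Rightarrow> node \<Rightarrow> node \<Rightarrow> real" where
  "eg_cap N x \<phi> z \<psi> (U i) Snk = \<phi> (x i) 1"
| "eg_cap N x \<phi> z \<psi> Src (U i) =
     \<phi> (x i) 0 + 1/2 * (\<Sum>j\<in>{1..N} - {i}. \<psi> (zsym z i j) 0 0)"
| "eg_cap N x \<phi> z \<psi> (U a) (U b) =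
     (if a < b then \<psi> (z a b) 1 0 - 1/2 * \<psi> (z a b) 0 0
      else \<psi> (z b a) 0 1 - 1/2 * \<psi> (z b a) 0 0)"
| "eg_cap N x \<phi> z \<psi> _ _ = 0"

definition is_st_cut :: "nat \<Rightarrow> node set \<Rightarrow> bool" where
  "is_st_cut N S \<longleftrightarrow> S \<subseteq> eg_nodes N \<and> Src \<in> S \<and> Snk \<notin> S"

definition cut_capacity ::
  "nat \<Rightarrow> (nat \<Rightarrow> 'x) \<Rightarrow> ('x \<Rightarrow> nat \<Rightarrow> real) \<Rightarrow> (nat \<Rightarrow> nat \<Rightarrow> 'z)
   \<Rightarrow> ('z \<Rightarrow> nat \<Rightarrow> nat \<Rightarrow> real) \<Rightarrow> (nat \<Rightarrow> nat \<Rightarrow> bool) \<Rightarrow> node set \<Rightarrow> real" where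
  "cut_capacity N x \<phi> z \<psi> rel S =
     (\<Sum>(a, b)\<in>{(a, b)\<in>eg_edges N rel. a \<in> S \<and> b \<in> eg_nodes N - S}. eg_cap N x \<phi> z \<psi> a b)"

definition is_min_cut ::
  "nat \<Rightarrow> (nat \<Rightarrow> 'x) \<Rightarrow> ('x \<Rightarrow> nat \<Rightarrow> real) \<Rightarrow> (nat \<Rightarrow> nat \<Rightarrow> 'z)
   \<Rightarrow> ('z \<Rightarrow> nat \<Rightarrow> nat \<Rightarrow> real) \<Rightarrow> (nat \<Rightarrow> nat \<Rightarrow> bool) \<Rightarrow> node set \<Rightarrow> bool" where
  "is_min_cut N x \<phi> z \<psi> rel S \<longleftrightarrow> is_st_cut N S \<and>
     (\<forall>S'. is_st_cut N S' \<longrightarrow> cut_capacity N x \<phi> z \<psi> rel S \<le> cut_capacity N x \<phi> z \<psi> rel S')"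

end

theory Submission
  imports Defs
begin

text \<open>
  With \<open>\<ell>\<^sub>i = [u\<^sub>i \<in> S]\<close>, a cut pays \<open>\<phi>(x\<^sub>i,1)\<close> or the source capacity of \<open>u\<^sub>i\<close>
  for every user, and one of the two capacities between \<open>u\<^sub>i\<close> and \<open>u\<^sub>j\<close> for every
  related pair separated by the cut. Because \<open>\<psi>(z,1,1) = 0\<close>, each pairwise term
  \<open>\<psi>(z\<^sub>i\<^sub>j,\<ell>\<^sub>i,\<ell>\<^sub>j)\<close> splits into half of \<open>\<psi>(z\<^sub>i\<^sub>j,0,0)\<close> for each endpoint labelled 0,
  which the source edges collect, plus exactly the capacity of the edge cut between
  \<open>u\<^sub>i\<close> and \<open>u\<^sub>j\<close>. Hence the capacity of every s-t cut equals the energy of its labelling.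
  Since every labelling arises from a cut, a minimum cut yields a minimum-energy labelling.
\<close>

lemma finite_pairs: "finite (pairs N)"
  by (rule finite_subset[of _ "{1..N} \<times> {1..N}"]) (auto simp: pairs_def)

lemma sum_off_diagonal_eq_sum_pairs:
  fixes f :: "nat \<Rightarrow> nat \<Rightarrow> 'a::comm_monoid_add"
  shows "(\<Sum>i=1..N. \<Sum>j\<in>{1..N} - {i}. f i j) = (\<Sum>(i, j)\<in>pairs N. f i j + f j i)"
proof -
  have off_diagonal: "Sigma {1..N} (\<lambda>i. {1..N} - {i}) = pairs N \<union> prod.swap ` pairs N"
    by (auto simp: pairs_def image_iff)
  have "(\<Sum>i=1..N. \<Sum>j\<in>{1..N} - {i}. f i j) = (\<Sum>(i, j)\<in>Sigma {1..N} (\<lambda>i. {1..N} - {i}). f i j)"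
    by (simp add: sum.Sigma)
  also have "\<dots> = (\<Sum>(i, j)\<in>pairs N. f i j) + (\<Sum>(i, j)\<in>prod.swap ` pairs N. f i j)"
    unfolding off_diagonal
    by (rule sum.union_disjoint) (auto simp: finite_pairs, auto simp: pairs_def)
  also have "(\<Sum>(i, j)\<in>prod.swap ` pairs N. f i j) = (\<Sum>(i, j)\<in>pairs N. f j i)"
    by (subst sum.reindex) (auto simp: case_prod_beta)
  finally show ?thesis
    by (simp add: sum.distrib case_prod_beta)
qed

lemma binary_term_split:
  fixes t :: "nat \<Rightarrow> nat \<Rightarrow> real"
  assumes "t 1 1 = 0" and "a \<in> {0, 1}" and "b \<in> {0, 1}"
  shows "t a b = (if a = 0 then t 0 0 / 2 else 0) + (if b = 0 then t 0 0 / 2 else 0)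
           + ((if a = 1 \<and> b = 0 then t 1 0 - t 0 0 / 2 else 0)
              + (if a = 0 \<and> b = 1 then t 0 1 - t 0 0 / 2 else 0))"
  using assms by auto

definition crossing_capacity :: "node set \<Rightarrow> (node \<Rightarrow> node \<Rightarrow> real) \<Rightarrow> nat \<Rightarrow> nat \<Rightarrow> real" where
  "crossing_capacity S c i j =
     (if U i \<in> S \<and> U j \<notin> S then c (U i) (U j) else 0)
   + (if U j \<in> S \<and> U i \<notin> S then c (U j) (U i) else 0)"

lemma eg_edges_eq:
  "eg_edges N rel = (\<lambda>i. (U i, Snk)) ` {1..N} \<union> (\<lambda>i. (Src, U i)) ` {1..N}
     \<union> (\<lambda>(i, j). (U i, U j)) ` {p \<in> pairs N. case_prod rel p}
     \<union> (\<lambda>(i, j). (U j, U i)) ` {p \<in> pairs N. case_prod rel p}"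
  unfolding eg_edges_def by force

lemma cut_capacity_eq:
  fixes x :: "nat \<Rightarrow> 'x" and \<phi> :: "'x \<Rightarrow> nat \<Rightarrow> real"
    and z :: "nat \<Rightarrow> nat \<Rightarrow> 'z" and \<psi> :: "'z \<Rightarrow> nat \<Rightarrow> nat \<Rightarrow> real"
  assumes cut: "is_st_cut N S"
  defines "c \<equiv> eg_cap N x \<phi> z \<psi>"
  shows "cut_capacity N x \<phi> z \<psi> rel S =
           (\<Sum>i=1..N. if U i \<in> S then c (U i) Snk else c Src (U i))
         + (\<Sum>(i, j)\<in>pairs N. if rel i j then crossing_capacity S c i j else 0)"
proof -
  define P where "P = {p \<in> pairs N. case_prod rel p}"
  define g where "g = (\<lambda>(a, b). if a \<in> S \<and> b \<in> eg_nodes N - S then c a b else 0)"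
  have "finite P"
    unfolding P_def using finite_pairs by simp
  have Src: "Src \<in> S" and Snk: "Snk \<notin> S"
    using cut by (auto simp: is_st_cut_def)
  have "finite (eg_edges N rel)"
    unfolding eg_edges_eq P_def[symmetric] using \<open>finite P\<close> by simp
  then have "cut_capacity N x \<phi> z \<psi> rel S = sum g (eg_edges N rel)"
    unfolding cut_capacity_def g_def c_def by (simp add: sum.inter_filter[symmetric] split_def)
  also have "\<dots> = (sum g ((\<lambda>i. (U i, Snk)) ` {1..N}) + sum g ((\<lambda>i. (Src, U i)) ` {1..N}))
      + (sum g ((\<lambda>(i, j). (U i, U j)) ` P) + sum g ((\<lambda>(i, j). (U j, U i)) ` P))"
    unfolding eg_edges_eq P_def[symmetric] add.assoc[symmetric] using \<open>finite P\<close>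
    by (subst sum.union_disjoint; auto simp: P_def pairs_def)+
  also have "sum g ((\<lambda>i. (U i, Snk)) ` {1..N}) + sum g ((\<lambda>i. (Src, U i)) ` {1..N})
      = (\<Sum>i=1..N. if U i \<in> S then c (U i) Snk else c Src (U i))"
    by (simp add: sum.reindex inj_on_def g_def eg_nodes_def Src Snk sum.distrib[symmetric])
       (auto intro: sum.cong)
  also have "sum g ((\<lambda>(i, j). (U i, U j)) ` P) + sum g ((\<lambda>(i, j). (U j, U i)) ` P)
      = (\<Sum>(i, j)\<in>P. crossing_capacity S c i j)"
  proof -
    have "sum g ((\<lambda>(i, j). (U i, U j)) ` P)
        = (\<Sum>(i, j)\<in>P. if U i \<in> S \<and> U j \<notin> S then c (U i) (U j) else 0)"
      and "sum g ((\<lambda>(i, j). (U j, U i)) ` P)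
        = (\<Sum>(i, j)\<in>P. if U j \<in> S \<and> U i \<notin> S then c (U j) (U i) else 0)"
      by (subst sum.reindex, auto simp: inj_on_def g_def eg_nodes_def P_def pairs_def
          intro!: sum.cong)+
    then show ?thesis
      by (simp add: crossing_capacity_def sum.distrib[symmetric] case_prod_beta)
  qed
  also have "\<dots> = (\<Sum>(i, j)\<in>pairs N. if rel i j then crossing_capacity S c i j else 0)"
    unfolding P_def using finite_pairs by (simp add: sum.inter_filter case_prod_beta)
  finally show ?thesis .
qed

lemma energy_of_cut_labeling_eq:
  fixes x :: "nat \<Rightarrow> 'x" and \<phi> :: "'x \<Rightarrow> nat \<Rightarrow> real"
    and z :: "nat \<Rightarrow> nat \<Rightarrow> 'z" and \<psi> :: "'z \<Rightarrow> nat \<Rightarrow> nat \<Rightarrow> real"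
  assumes no_rel: "\<And>i j a b. (i, j) \<in> pairs N \<Longrightarrow> \<not> rel i j \<Longrightarrow> a \<in> {0, 1} \<Longrightarrow> b \<in> {0, 1}
                 \<Longrightarrow> \<psi> (z i j) a b = 0"
    and psi11: "\<And>i j. (i, j) \<in> pairs N \<Longrightarrow> \<psi> (z i j) 1 1 = 0"
  defines "c \<equiv> eg_cap N x \<phi> z \<psi>"
  shows "energy N x \<phi> z \<psi> (\<lambda>i. if U i \<in> S then 1 else 0) =
           (\<Sum>i=1..N. if U i \<in> S then c (U i) Snk else c Src (U i))
         + (\<Sum>(i, j)\<in>pairs N. if rel i j then crossing_capacity S c i j else 0)"
    (is "_ = ?unary + ?pairwise")
proof -
  define l :: "nat \<Rightarrow> nat" where "l i = (if U i \<in> S then 1 else 0)" for i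
  define f where "f i j = (if U i \<in> S then 0 else \<psi> (zsym z i j) 0 0)" for i j
  have "(\<Sum>(i, j)\<in>pairs N. \<psi> (z i j) (l i) (l j))
      = (\<Sum>(i, j)\<in>pairs N. (f i j + f j i) / 2
           + (if rel i j then crossing_capacity S c i j else 0))"
  proof (intro sum.cong refl, clarify)
    fix i j assume ij: "(i, j) \<in> pairs N"
    then have "i < j" "zsym z i j = z i j" "zsym z j i = z i j"
      by (auto simp: pairs_def zsym_def)
    with binary_term_split[of "\<psi> (z i j)" "l i" "l j"] no_rel[OF ij] psi11[OF ij]
    show "\<psi> (z i j) (l i) (l j) = (f i j + f j i) / 2
           + (if rel i j then crossing_capacity S c i j else 0)"
      by (auto simp: l_def f_def c_def crossing_capacity_def)
  qed
  also have "\<dots> = (\<Sum>i=1..N. \<Sum>j\<in>{1..N} - {i}. f i j) / 2 + ?pairwise"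
    unfolding sum_off_diagonal_eq_sum_pairs
    by (simp add: sum.distrib sum_divide_distrib[symmetric] case_prod_beta)
  finally have pairwise: "(\<Sum>(i, j)\<in>pairs N. \<psi> (z i j) (l i) (l j))
      = (\<Sum>i=1..N. \<Sum>j\<in>{1..N} - {i}. f i j) / 2 + ?pairwise" .
  have "(\<Sum>i=1..N. \<phi> (x i) (l i)) + (\<Sum>i=1..N. \<Sum>j\<in>{1..N} - {i}. f i j) / 2 = ?unary"
    unfolding sum_divide_distrib sum.distrib[symmetric]
    by (intro sum.cong) (auto simp: l_def f_def c_def sum_divide_distrib[symmetric])
  with pairwise show ?thesis
    unfolding energy_def l_def[symmetric] by linarith
qed

lemma cut_capacity_eq_energy:
  fixes x :: "nat \<Rightarrow> 'x" and \<phi> :: "'x \<Rightarrow> nat \<Rightarrow> real"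
    and z :: "nat \<Rightarrow> nat \<Rightarrow> 'z" and \<psi> :: "'z \<Rightarrow> nat \<Rightarrow> nat \<Rightarrow> real"
  assumes no_rel: "\<And>i j a b. (i, j) \<in> pairs N \<Longrightarrow> \<not> rel i j \<Longrightarrow> a \<in> {0, 1} \<Longrightarrow> b \<in> {0, 1}
                 \<Longrightarrow> \<psi> (z i j) a b = 0"
    and psi11: "\<And>i j. (i, j) \<in> pairs N \<Longrightarrow> \<psi> (z i j) 1 1 = 0"
    and cut: "is_st_cut N S"
  shows "cut_capacity N x \<phi> z \<psi> rel S = energy N x \<phi> z \<psi> (\<lambda>i. if U i \<in> S then 1 else 0)"
  using cut_capacity_eq[OF cut, where x = x and \<phi> = \<phi> and z = z and \<psi> = \<psi> and rel = rel]
    energy_of_cut_labeling_eq[where x = x and \<phi> = \<phi> and z = z and \<psi> = \<psi> and S = S, OF no_rel psi11]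
  by simp

lemma energy_cong:
  assumes "\<And>i. i \<in> {1..N} \<Longrightarrow> L i = L' i"
  shows "energy N x \<phi> z \<psi> L = energy N x \<phi> z \<psi> L'"
  unfolding energy_def using assms
  by (intro arg_cong2[where f = "(+)"] sum.cong) (auto simp: pairs_def)

definition cut_of_labeling :: "nat \<Rightarrow> (nat \<Rightarrow> nat) \<Rightarrow> node set" where
  "cut_of_labeling N L = insert Src (U ` {i \<in> {1..N}. L i = 1})"

lemma is_st_cut_cut_of_labeling: "is_st_cut N (cut_of_labeling N L)"
  by (auto simp: cut_of_labeling_def is_st_cut_def eg_nodes_def)

lemma energy_cut_of_labeling:
  assumes "L \<in> labelings N"
  shows "energy N x \<phi> z \<psi> (\<lambda>i. if U i \<in> cut_of_labeling N L then 1 else 0) = energy N x \<phi> z \<psi> L"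
  using assms by (intro energy_cong) (auto simp: cut_of_labeling_def labelings_def)

theorem theorem1:
  fixes N :: nat and x :: "nat \<Rightarrow> 'x" and \<phi> :: "'x \<Rightarrow> nat \<Rightarrow> real"
    and z :: "nat \<Rightarrow> nat \<Rightarrow> 'z" and \<psi> :: "'z \<Rightarrow> nat \<Rightarrow> nat \<Rightarrow> real"
    and rel :: "nat \<Rightarrow> nat \<Rightarrow> bool" and S :: "node set"
  assumes "N \<ge> 1"
    and no_rel: "\<And>i j a b. (i, j) \<in> pairs N \<Longrightarrow> \<not> rel i j \<Longrightarrow> a \<in> {0, 1} \<Longrightarrow> b \<in> {0, 1}
                 \<Longrightarrow> \<psi> (z i j) a b = 0"
    and psi11: "\<And>i j. (i, j) \<in> pairs N \<Longrightarrow> \<psi> (z i j) 1 1 = 0"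
    and psi00: "\<And>i j. (i, j) \<in> pairs N \<Longrightarrow> 0 \<le> \<psi> (z i j) 0 0"
    and psi01: "\<And>i j. (i, j) \<in> pairs N \<Longrightarrow> \<psi> (z i j) 0 0 \<le> \<psi> (z i j) 0 1"
    and psi10: "\<And>i j. (i, j) \<in> pairs N \<Longrightarrow> \<psi> (z i j) 0 0 \<le> \<psi> (z i j) 1 0"
    and mincut: "is_min_cut N x \<phi> z \<psi> rel S"
  shows "(\<lambda>i. if U i \<in> S then 1 else 0) \<in> labelings N
       \<and> (\<forall>L\<in>labelings N. energy N x \<phi> z \<psi> (\<lambda>i. if U i \<in> S then 1 else 0) \<le> energy N x \<phi> z \<psi> L)
       \<and> energy N x \<phi> z \<psi> (\<lambda>i. if U i \<in> S then 1 else 0) = cut_capacity N x \<phi> z \<psi> rel S"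
proof -
  \<comment> \<open>\<open>psi00\<close>, \<open>psi01\<close>, \<open>psi10\<close> only make the capacities nonnegative, as max-flow
     algorithms need; the correspondence itself holds without them.\<close>
  have cut_energy: "cut_capacity N x \<phi> z \<psi> rel S' = energy N x \<phi> z \<psi> (\<lambda>i. if U i \<in> S' then 1 else 0)"
    if "is_st_cut N S'" for S'
    using cut_capacity_eq_energy[where x = x and \<phi> = \<phi> and z = z and \<psi> = \<psi>, OF no_rel psi11 that] .
  have energy_eq_capacity: "energy N x \<phi> z \<psi> (\<lambda>i. if U i \<in> S then 1 else 0) = cut_capacity N x \<phi> z \<psi> rel S"
    using mincut cut_energy by (simp add: is_min_cut_def)
  have optimal: "energy N x \<phi> z \<psi> (\<lambda>i. if U i \<in> S then 1 else 0) \<le> energy N x \<phi> z \<psi> L"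
    if L: "L \<in> labelings N" for L
  proof -
    note energy_eq_capacity
    also have "cut_capacity N x \<phi> z \<psi> rel S \<le> cut_capacity N x \<phi> z \<psi> rel (cut_of_labeling N L)"
      using mincut is_st_cut_cut_of_labeling by (simp add: is_min_cut_def)
    also have "\<dots> = energy N x \<phi> z \<psi> L"
      using cut_energy[OF is_st_cut_cut_of_labeling] energy_cut_of_labeling[OF L] by simp
    finally show ?thesis .
  qed
  show ?thesis
    using energy_eq_capacity optimal by (simp add: labelings_def)
qed

end
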